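(* Let $q\in(0,1)$ and let $W\in[0,1]^{I\times I}$ be symmetric ($W=W^*$). Consider the Probabilistic Broadcast Gossip Algorithm: at each time $t$, a node $j$ is drawn uniformly at random from $I$; each node $i\ne j$ independently receives $x_j(t)$ with probability $W_{ij}$, and then sets $x_i(t+1)=x_i(t)+q(x_j(t)-x_i(t))$; all other nodes keep $x_k(t+1)=x_k(t)$. The random choices at different times are independent. Writing this as $x(t+1)=x(t)-L(t)x(t)$, one has $\mathbf{1}^*\mathbb{E}[L(t)]=0$ and $$\mathbb{E}[L(t)^*\mathbf{1}\mathbf{1}^*L(t)]\le\gamma\,\mathbb{E}[L(t)+L(t)^*-L(t)^*L(t)]\quad\text{with }\gamma=(W_{\max}+1)\frac{q}{1-q},$$ where $W_{\max}=\max_{i\in I}\sum_{j\in I}W_{ij}$; consequently $\mathbb{E}[(\bar x(t)-\bar x(0))^2]\le\frac{\gamma}{N+\gamma}V(x(0))$ for all $t\ge0$.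
   Context: $I$ is a finite set of $N$ nodes, $x(0)\in\mathbb{R}^I$ deterministic. For the update above, $L(t)$ is the Laplacian of the random weight matrix $a_{ij}(t)$ (where $a_{ij}(t)=q$ if $j$ is the broadcasting node and $i\neq j$ received, and $0$ otherwise for $i\ne j$): $L_{ij}(t)=-a_{ij}(t)$ for $i\ne j$, $L_{ii}(t)=\sum_{j\ne i}a_{ij}(t)$. $\mathbf{1}$ is the all-ones vector, $M^*$ the transpose; $\bar y=\frac1N\sum_i y_i$, $V(y)=\frac1N\sum_i(y_i-\bar y)^2$. For square matrices, $A\le B$ means $A-B$ is negative semidefinite. *)

theory Defs
  imports "HOL-Probability.Probability"
begin

text \<open>Nodes: the finite type 'i (so N = CARD('i)). Matrices on I are functions 'i => 'i => real.
One round of the algorithm is an outcome (j, r): j the broadcasting node, r i = True iff node i received.\<close>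

type_synonym 'i outcome = "'i \<times> ('i \<Rightarrow> bool)"

definition outcome_pmf :: "('i::finite \<Rightarrow> 'i \<Rightarrow> real) \<Rightarrow> 'i outcome pmf" where
  "outcome_pmf W = do {
      j \<leftarrow> pmf_of_set (UNIV :: 'i set);
      r \<leftarrow> Pi_pmf (UNIV - {j}) False (\<lambda>i. bernoulli_pmf (W i j));
      return_pmf (j, r) }"

definition pbga_step :: "real \<Rightarrow> 'i outcome \<Rightarrow> ('i \<Rightarrow> real) \<Rightarrow> ('i \<Rightarrow> real)" where
  "pbga_step q \<omega> x = (\<lambda>i. if i \<noteq> fst \<omega> \<and> snd \<omega> i then x i + q * (x (fst \<omega>) - x i) else x i)"

fun pbga_state :: "('i::finite \<Rightarrow> 'i \<Rightarrow> real) \<Rightarrow> real \<Rightarrow> ('i \<Rightarrow> real) \<Rightarrow> nat \<Rightarrow> ('i \<Rightarrow> real) pmf" where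
  "pbga_state W q x0 0 = return_pmf x0"
| "pbga_state W q x0 (Suc t) =
     pbga_state W q x0 t \<bind> (\<lambda>x. map_pmf (\<lambda>\<omega>. pbga_step q \<omega> x) (outcome_pmf W))"

definition pbga_weight :: "real \<Rightarrow> 'i outcome \<Rightarrow> 'i \<Rightarrow> 'i \<Rightarrow> real" where
  "pbga_weight q \<omega> i k = (if k = fst \<omega> \<and> i \<noteq> k \<and> snd \<omega> i then q else 0)"

definition laplacian :: "('i::finite \<Rightarrow> 'i \<Rightarrow> real) \<Rightarrow> 'i \<Rightarrow> 'i \<Rightarrow> real" where
  "laplacian a i k = (if i = k then (\<Sum>l\<in>UNIV - {i}. a i l) else - a i k)"

definition pbga_L :: "real \<Rightarrow> 'i::finite outcome \<Rightarrow> 'i \<Rightarrow> 'i \<Rightarrow> real" where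
  "pbga_L q \<omega> = laplacian (pbga_weight q \<omega>)"

definition mmult :: "('i::finite \<Rightarrow> 'i \<Rightarrow> real) \<Rightarrow> ('i \<Rightarrow> 'i \<Rightarrow> real) \<Rightarrow> 'i \<Rightarrow> 'i \<Rightarrow> real" where
  "mmult A B = (\<lambda>i k. \<Sum>l\<in>UNIV. A i l * B l k)"

definition mtrans :: "('i \<Rightarrow> 'i \<Rightarrow> real) \<Rightarrow> 'i \<Rightarrow> 'i \<Rightarrow> real" where
  "mtrans A = (\<lambda>i k. A k i)"

definition ones_mat :: "'i \<Rightarrow> 'i \<Rightarrow> real" where
  "ones_mat = (\<lambda>i k. 1)"

definition mat_le :: "('i::finite \<Rightarrow> 'i \<Rightarrow> real) \<Rightarrow> ('i \<Rightarrow> 'i \<Rightarrow> real) \<Rightarrow> bool" where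
  "mat_le A B \<longleftrightarrow> (\<forall>v. (\<Sum>i\<in>UNIV. \<Sum>k\<in>UNIV. v i * (A i k - B i k) * v k) \<le> 0)"

definition mexp :: "'w pmf \<Rightarrow> ('w \<Rightarrow> 'i \<Rightarrow> 'i \<Rightarrow> real) \<Rightarrow> 'i \<Rightarrow> 'i \<Rightarrow> real" where
  "mexp p M = (\<lambda>i k. measure_pmf.expectation p (\<lambda>\<omega>. M \<omega> i k))"

definition avg :: "('i::finite \<Rightarrow> real) \<Rightarrow> real" where
  "avg y = (\<Sum>i\<in>UNIV. y i) / real CARD('i)"

definition Var :: "('i::finite \<Rightarrow> real) \<Rightarrow> real" where
  "Var y = (\<Sum>i\<in>UNIV. (y i - avg y)^2) / real CARD('i)"

end

theory Submission
  imports Defs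
begin

(* Write d = L(omega) v.  After the broadcaster j is fixed, the receivers are independent
   Bernoulli(W_ij) trials, so the first two moments of d are explicit in terms of
   p_j(i) = W_ij (i ~= j).  With the Dirichlet energy S(v) = sum_{i,j} p_j(i) (v_i - v_j)^2:
     E[sum_i d_i] = 0                                    (symmetry of W),
     E[(sum_i d_i)^2] <= (W_max + 1) q^2 S(v) / N         (variance formula, Cauchy-Schwarz),
     E[sum_i (2 v_i d_i - d_i^2)] = q (1 - q) S(v) / N    (exact),
   hence E[(sum_i d_i)^2] <= gamma E[sum_i (2 v_i d_i - d_i^2)].
   The first two claims are these facts read through column sums and quadratic forms.  For the
   third, the potential (sum_i (x_i - a))^2 + gamma sum_i (x_i - a)^2, with a the initial average,
   is non-increasing in expectation by the same inequality; it is initially gamma N Var(x0) and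
   dominates N (N + gamma) (avg x - a)^2, which gives the bound. *)

lemma finite_set_pmf_of_finite_type [simp]: "finite (set_pmf (p :: 'a::finite pmf))"
  by (rule finite_subset[of _ UNIV]) auto

lemma integrable_pmf_of_finite_type [simp]:
  "integrable (measure_pmf (p :: 'a::finite pmf)) (f :: 'a \<Rightarrow> real)"
  by (rule integrable_measure_pmf_finite) simp

text \<open>A symmetric weight paired with an antisymmetric quantity sums to zero; this is how the
  symmetry of W makes the node average unbiased and cancels the cross terms of the dissipation.\<close>
lemma sum_symmetric_times_antisymmetric:
  fixes a g :: "'i \<Rightarrow> 'i \<Rightarrow> real"
  assumes "\<And>i j. a i j = a j i" "\<And>i j. g i j = - g j i"
  shows "(\<Sum>j\<in>A. \<Sum>i\<in>A. a i j * g i j) = 0"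
proof -
  have "(\<Sum>j\<in>A. \<Sum>i\<in>A. a i j * g i j) = (\<Sum>i\<in>A. \<Sum>j\<in>A. a i j * g i j)"
    by (rule sum.swap)
  also have "\<dots> = (\<Sum>i\<in>A. \<Sum>j\<in>A. - (a j i * g j i))"
    by (intro sum.cong refl) (metis assms mult_minus_right)
  also have "\<dots> = - (\<Sum>i\<in>A. \<Sum>j\<in>A. a j i * g j i)"
    by (simp add: sum_negf)
  finally show ?thesis by simp
qed

text \<open>Cauchy--Schwarz with nonnegative weights, obtained from the library version with square-root
  weights.\<close>
lemma weighted_cauchy_schwarz:
  fixes w d :: "'a \<Rightarrow> real"
  assumes "\<And>i. 0 \<le> w i"
  shows "(\<Sum>i\<in>A. w i * d i)^2 \<le> (\<Sum>i\<in>A. w i) * (\<Sum>i\<in>A. w i * (d i)^2)"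
  using Cauchy_Schwarz_ineq_sum[of "\<lambda>i. sqrt (w i)" "\<lambda>i. sqrt (w i) * d i" A] assms
  by (simp add: power_mult_distrib mult.assoc[symmetric])

definition receivers_pmf :: "('i::finite \<Rightarrow> 'i \<Rightarrow> real) \<Rightarrow> 'i \<Rightarrow> ('i \<Rightarrow> bool) pmf" where
  "receivers_pmf W j = Pi_pmf (UNIV - {j}) False (\<lambda>i. bernoulli_pmf (W i j))"

lemma expectation_outcome_pmf:
  fixes f :: "'i::finite outcome \<Rightarrow> real"
  shows "measure_pmf.expectation (outcome_pmf W) f =
     (\<Sum>j\<in>UNIV. measure_pmf.expectation (receivers_pmf W j) (\<lambda>r. f (j, r))) / real CARD('i)"
  unfolding outcome_pmf_def receivers_pmf_def sum_divide_distrib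
  by (subst pmf_expectation_bind_pmf_of_set) (auto simp: map_pmf_def[symmetric] field_simps)

lemma expectation_receives:
  assumes "i \<noteq> j" "0 \<le> W i j" "W i j \<le> 1"
  shows "measure_pmf.expectation (receivers_pmf W j) (\<lambda>r. if r i then c else 0) = W i j * c"
proof -
  have "map_pmf (\<lambda>r. r i) (receivers_pmf W j) = bernoulli_pmf (W i j)"
    unfolding receivers_pmf_def using assms by (subst Pi_pmf_component) auto
  then have "measure_pmf.expectation (receivers_pmf W j) (\<lambda>r. if r i then c else 0)
           = measure_pmf.expectation (bernoulli_pmf (W i j)) (\<lambda>b. if b then c else 0)"
    using integral_map_pmf[of "\<lambda>r. r i" "receivers_pmf W j" "\<lambda>b. if b then c else 0"] by simp
  also have "\<dots> = W i j * c"
    using assms by (subst integral_measure_pmf_real[where A = UNIV]) (auto simp: UNIV_bool)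
  finally show ?thesis .
qed

lemma expectation_both_receive:
  assumes "i \<noteq> j" "k \<noteq> j" "i \<noteq> k" and W: "\<And>i. 0 \<le> W i j \<and> W i j \<le> 1"
  shows "measure_pmf.expectation (receivers_pmf W j) (\<lambda>r. if r i \<and> r k then c else 0)
       = W i j * W k j * c"
proof -
  define f where "f x b = (if x = i \<or> x = k then (if b then 1 else 0) else (1::real))" for x b
  have split: "(\<Prod>x\<in>UNIV - {j}. g x) = (\<Prod>x\<in>{i, k}. g x) * (\<Prod>x\<in>UNIV - {j} - {i, k}. g x)"
    for g :: "'a \<Rightarrow> real"
    using assms(1-2) by (subst prod.subset_diff[of "{i, k}"]) auto
  have indicator: "(\<Prod>x\<in>UNIV - {j}. f x (r x)) = (if r i \<and> r k then 1 else 0)" for r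
    unfolding split using assms(3) by (simp add: f_def)
  have moment: "measure_pmf.expectation (bernoulli_pmf (W x j)) (f x)
              = (if x = i \<or> x = k then W x j else 1)" for x
    using W[of x] by (subst integral_measure_pmf_real[where A = UNIV]) (auto simp: UNIV_bool f_def)
  have "measure_pmf.expectation (receivers_pmf W j) (\<lambda>r. \<Prod>x\<in>UNIV - {j}. f x (r x))
      = (\<Prod>x\<in>UNIV - {j}. measure_pmf.expectation (bernoulli_pmf (W x j)) (f x))"
    unfolding receivers_pmf_def by (rule expectation_prod_Pi_pmf) (auto simp: f_def)
  also have "\<dots> = W i j * W k j"
    unfolding split moment using assms(3) by simp
  finally have "measure_pmf.expectation (receivers_pmf W j) (\<lambda>r. if r i \<and> r k then 1 else 0)
              = W i j * W k j"
    by (simp only: indicator)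
  moreover have "(\<lambda>r. if r i \<and> r k then c else 0) = (\<lambda>r. c * (if r i \<and> r k then 1 else 0))"
    by auto
  ultimately show ?thesis by simp
qed

definition reception_prob :: "('i \<Rightarrow> 'i \<Rightarrow> real) \<Rightarrow> 'i \<Rightarrow> 'i \<Rightarrow> real" where
  "reception_prob W j i = (if i \<noteq> j then W i j else 0)"

lemma reception_prob_sym: "W i j = W j i \<Longrightarrow> reception_prob W j i = reception_prob W i j"
  by (simp add: reception_prob_def)

lemma expectation_received_pair:
  assumes W: "\<And>i. 0 \<le> W i j \<and> W i j \<le> 1"
  shows "measure_pmf.expectation (receivers_pmf W j)
           (\<lambda>r. if i \<noteq> j \<and> r i \<and> k \<noteq> j \<and> r k then c else 0)
       = (reception_prob W j i * reception_prob W j k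
          + (if i = k then reception_prob W j i * (1 - reception_prob W j i) else 0)) * c"
proof (cases "i \<noteq> j \<and> k \<noteq> j")
  case True
  show ?thesis
  proof (cases "i = k")
    case True
    then show ?thesis using \<open>i \<noteq> j \<and> k \<noteq> j\<close> expectation_receives[of i j W c] W[of i]
      by (simp add: reception_prob_def algebra_simps)
  next
    case False
    then show ?thesis using \<open>i \<noteq> j \<and> k \<noteq> j\<close> expectation_both_receive[of i j k W c] W
      by (simp add: reception_prob_def)
  qed
next
  case False
  then show ?thesis by (auto simp: reception_prob_def)
qed

lemma expectation_received:
  assumes "\<And>i. 0 \<le> W i j \<and> W i j \<le> 1"
  shows "measure_pmf.expectation (receivers_pmf W j) (\<lambda>r. if i \<noteq> j \<and> r i then c else 0)
       = reception_prob W j i * c"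
  using expectation_receives[of i j W c] assms[of i]
  by (cases "i = j") (auto simp: reception_prob_def)

text \<open>Second moment of the total amount received: since receptions are independent, it is the
  squared mean plus the sum of the Bernoulli variances.\<close>
lemma expectation_received_sum_sq:
  assumes "\<And>i. 0 \<le> W i j \<and> W i j \<le> 1"
  shows "measure_pmf.expectation (receivers_pmf W j)
           (\<lambda>r. (\<Sum>i\<in>UNIV. if i \<noteq> j \<and> r i then d i else 0)^2)
       = (\<Sum>i\<in>UNIV. reception_prob W j i * d i)^2
         + (\<Sum>i\<in>UNIV. reception_prob W j i * (1 - reception_prob W j i) * (d i)^2)"
proof -
  let ?p = "reception_prob W j"
  have square: "(\<Sum>i\<in>UNIV. if i \<noteq> j \<and> r i then d i else 0)^2
      = (\<Sum>i\<in>UNIV. \<Sum>k\<in>UNIV. if i \<noteq> j \<and> r i \<and> k \<noteq> j \<and> r k then d i * d k else 0)"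
    for r :: "'a \<Rightarrow> bool"
    unfolding power2_eq_square sum_product by (intro sum.cong refl) auto
  have "measure_pmf.expectation (receivers_pmf W j)
          (\<lambda>r. (\<Sum>i\<in>UNIV. if i \<noteq> j \<and> r i then d i else 0)^2)
      = (\<Sum>i\<in>UNIV. \<Sum>k\<in>UNIV. (?p i * ?p k + (if i = k then ?p i * (1 - ?p i) else 0)) * (d i * d k))"
    unfolding square
    by (simp add: Bochner_Integration.integral_sum
                  expectation_received_pair[where W = W and j = j, OF assms])
  also have "\<dots> = (\<Sum>i\<in>UNIV. \<Sum>k\<in>UNIV. (?p i * d i) * (?p k * d k))
                 + (\<Sum>i\<in>UNIV. ?p i * (1 - ?p i) * (d i)^2)"
  proof -
    have "(?p i * ?p k + (if i = k then ?p i * (1 - ?p i) else 0)) * (d i * d k)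
        = (?p i * d i) * (?p k * d k) + (if i = k then ?p i * (1 - ?p i) * (d i)^2 else 0)" for i k
      by (simp add: algebra_simps power2_eq_square)
    then show ?thesis by (simp add: sum.distrib)
  qed
  finally show ?thesis by (simp add: power2_eq_square sum_product)
qed

definition max_degree :: "('i::finite \<Rightarrow> 'i \<Rightarrow> real) \<Rightarrow> real" where
  "max_degree W = Max (range (\<lambda>i. \<Sum>j\<in>UNIV. W i j))"

lemma reception_prob_sum_le_max_degree:
  assumes "\<And>i j. 0 \<le> W i j" "\<And>i j. W i j = W j i"
  shows "(\<Sum>i\<in>UNIV. reception_prob W j i) \<le> max_degree W"
proof -
  have "(\<Sum>i\<in>UNIV. reception_prob W j i) \<le> (\<Sum>i\<in>UNIV. W j i)"
    using assms by (intro sum_mono) (auto simp: reception_prob_def)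
  also have "\<dots> \<le> max_degree W"
    unfolding max_degree_def by (rule Max_ge) auto
  finally show ?thesis .
qed

lemma max_degree_nonneg:
  assumes "\<And>i j. 0 \<le> W i j"
  shows "0 \<le> max_degree W"
proof -
  have "0 \<le> (\<Sum>j\<in>UNIV. W i j)" for i
    using assms by (simp add: sum_nonneg)
  moreover have "(\<Sum>j\<in>UNIV. W i j) \<le> max_degree W" for i
    unfolding max_degree_def by (rule Max_ge) auto
  ultimately show ?thesis by (meson order_trans)
qed

definition pbga_Lv :: "real \<Rightarrow> 'i outcome \<Rightarrow> ('i \<Rightarrow> real) \<Rightarrow> 'i \<Rightarrow> real" where
  "pbga_Lv q \<omega> v i = (if i \<noteq> fst \<omega> \<and> snd \<omega> i then q * (v i - v (fst \<omega>)) else 0)"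

lemma pbga_L_entry:
  "pbga_L q (j, r) i k = (if i \<noteq> j \<and> r i then (if k = i then q else if k = j then - q else 0) else 0)"
proof -
  have "(\<Sum>l\<in>UNIV - {i}. pbga_weight q (j, r) i l)
      = (\<Sum>l\<in>UNIV - {i}. if l = j then (if i \<noteq> j \<and> r i then q else 0) else 0)"
    by (intro sum.cong refl) (auto simp: pbga_weight_def)
  also have "\<dots> = (if i \<noteq> j \<and> r i then q else 0)"
    by (subst sum.delta) auto
  finally show ?thesis
    by (auto simp: pbga_L_def laplacian_def pbga_weight_def)
qed

lemma pbga_L_mult_vec: "(\<Sum>k\<in>UNIV. pbga_L q \<omega> i k * v k) = pbga_Lv q \<omega> v i"
proof (cases \<omega>)
  case (Pair j r)
  show ?thesis
  proof (cases "i \<noteq> j \<and> r i")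
    case True
    then have "(\<Sum>k\<in>UNIV. pbga_L q \<omega> i k * v k)
             = (\<Sum>k\<in>UNIV. (if k = i then q * v i else 0) + (if k = j then - q * v j else 0))"
      by (intro sum.cong) (auto simp: Pair pbga_L_entry)
    then show ?thesis using True by (simp add: sum.distrib Pair pbga_Lv_def algebra_simps)
  qed (auto simp: Pair pbga_L_entry pbga_Lv_def)
qed

text \<open>The Dirichlet energy of v on the reception graph.  Both the squared sum of L v and the
  dissipation of v are controlled by it, with the constants (W_max + 1) q^2 and q (1 - q).\<close>
definition edge_energy :: "('i::finite \<Rightarrow> 'i \<Rightarrow> real) \<Rightarrow> ('i \<Rightarrow> real) \<Rightarrow> real" where
  "edge_energy W v = (\<Sum>j\<in>UNIV. \<Sum>i\<in>UNIV. reception_prob W j i * (v i - v j)^2)"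

lemma expectation_pbga_Lv_sum:
  fixes W :: "'i::finite \<Rightarrow> 'i \<Rightarrow> real"
  assumes W: "\<And>i j. 0 \<le> W i j \<and> W i j \<le> 1" "\<And>i j. W i j = W j i"
  shows "measure_pmf.expectation (outcome_pmf W) (\<lambda>\<omega>. \<Sum>i\<in>UNIV. pbga_Lv q \<omega> v i) = 0"
proof -
  have "measure_pmf.expectation (outcome_pmf W) (\<lambda>\<omega>. \<Sum>i\<in>UNIV. pbga_Lv q \<omega> v i)
      = (\<Sum>j\<in>UNIV. \<Sum>i\<in>UNIV. reception_prob W j i * (q * (v i - v j))) / real CARD('i)"
    by (simp only: expectation_outcome_pmf pbga_Lv_def fst_conv snd_conv)
       (simp add: expectation_received W(1))
  also have "(\<Sum>j\<in>UNIV. \<Sum>i\<in>UNIV. reception_prob W j i * (q * (v i - v j))) = 0"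
    by (rule sum_symmetric_times_antisymmetric)
       (auto intro: reception_prob_sym W(2) simp: algebra_simps)
  finally show ?thesis by simp
qed

text \<open>Second moment bound: for each broadcaster use the exact variance formula, Cauchy--Schwarz
  for the squared mean, and the column bound by W_max.\<close>
lemma expectation_pbga_Lv_sum_sq:
  fixes W :: "'i::finite \<Rightarrow> 'i \<Rightarrow> real"
  assumes W: "\<And>i j. 0 \<le> W i j \<and> W i j \<le> 1" "\<And>i j. W i j = W j i"
  shows "measure_pmf.expectation (outcome_pmf W) (\<lambda>\<omega>. (\<Sum>i\<in>UNIV. pbga_Lv q \<omega> v i)^2)
       \<le> (max_degree W + 1) * q^2 * edge_energy W v / real CARD('i)"
proof -
  have column: "measure_pmf.expectation (receivers_pmf W j)
                  (\<lambda>r. (\<Sum>i\<in>UNIV. if i \<noteq> j \<and> r i then q * (v i - v j) else 0)^2)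
              \<le> (max_degree W + 1) * (\<Sum>i\<in>UNIV. reception_prob W j i * (q * (v i - v j))^2)" for j
  proof -
    let ?p = "reception_prob W j" and ?d = "\<lambda>i. q * (v i - v j)"
    have p: "0 \<le> ?p i" "?p i \<le> 1" for i
      using W(1)[of i j] by (auto simp: reception_prob_def)
    have "(\<Sum>i\<in>UNIV. ?p i * ?d i)^2 \<le> (\<Sum>i\<in>UNIV. ?p i) * (\<Sum>i\<in>UNIV. ?p i * (?d i)^2)"
      by (rule weighted_cauchy_schwarz) (simp add: p)
    also have "\<dots> \<le> max_degree W * (\<Sum>i\<in>UNIV. ?p i * (?d i)^2)"
      by (rule mult_right_mono[OF reception_prob_sum_le_max_degree]) (use W p in \<open>auto intro: sum_nonneg\<close>)
    finally have mean: "(\<Sum>i\<in>UNIV. ?p i * ?d i)^2 \<le> max_degree W * (\<Sum>i\<in>UNIV. ?p i * (?d i)^2)" .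
    have variance: "(\<Sum>i\<in>UNIV. ?p i * (1 - ?p i) * (?d i)^2) \<le> (\<Sum>i\<in>UNIV. ?p i * (?d i)^2)"
      by (intro sum_mono) (simp add: p algebra_simps)
    show ?thesis
      using mean variance by (simp add: expectation_received_sum_sq W(1) algebra_simps)
  qed
  have "measure_pmf.expectation (outcome_pmf W) (\<lambda>\<omega>. (\<Sum>i\<in>UNIV. pbga_Lv q \<omega> v i)^2)
      = (\<Sum>j\<in>UNIV. measure_pmf.expectation (receivers_pmf W j)
           (\<lambda>r. (\<Sum>i\<in>UNIV. if i \<noteq> j \<and> r i then q * (v i - v j) else 0)^2)) / real CARD('i)"
    by (simp only: expectation_outcome_pmf pbga_Lv_def fst_conv snd_conv)
  also have "\<dots> \<le> (\<Sum>j\<in>UNIV. (max_degree W + 1)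
                   * (\<Sum>i\<in>UNIV. reception_prob W j i * (q * (v i - v j))^2)) / real CARD('i)"
    by (intro divide_right_mono sum_mono column) simp
  also have "\<dots> = (max_degree W + 1) * q^2 * edge_energy W v / real CARD('i)"
    by (simp add: edge_energy_def sum_distrib_left power_mult_distrib mult_ac)
  finally show ?thesis .
qed

text \<open>Exact value of the expected dissipation: the summand splits as q (1 - q) (v_i - v_j)^2 plus
  the antisymmetric part q (v_i^2 - v_j^2), which averages out.\<close>
lemma expectation_pbga_dissipation:
  fixes W :: "'i::finite \<Rightarrow> 'i \<Rightarrow> real"
  assumes W: "\<And>i j. 0 \<le> W i j \<and> W i j \<le> 1" "\<And>i j. W i j = W j i"
  shows "measure_pmf.expectation (outcome_pmf W)
           (\<lambda>\<omega>. \<Sum>i\<in>UNIV. 2 * v i * pbga_Lv q \<omega> v i - (pbga_Lv q \<omega> v i)^2)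
       = q * (1 - q) * edge_energy W v / real CARD('i)"
proof -
  define g where "g j i = 2 * v i * (q * (v i - v j)) - (q * (v i - v j))^2" for j i
  have pointwise: "2 * v i * pbga_Lv q \<omega> v i - (pbga_Lv q \<omega> v i)^2
                 = (if i \<noteq> fst \<omega> \<and> snd \<omega> i then g (fst \<omega>) i else 0)" for \<omega> i
    by (simp add: pbga_Lv_def g_def)
  have g: "g j i = q * (1 - q) * (v i - v j)^2 + q * ((v i)^2 - (v j)^2)" for j i
    by (simp add: g_def power2_eq_square algebra_simps)
  have "measure_pmf.expectation (outcome_pmf W)
           (\<lambda>\<omega>. \<Sum>i\<in>UNIV. 2 * v i * pbga_Lv q \<omega> v i - (pbga_Lv q \<omega> v i)^2)
      = (\<Sum>j\<in>UNIV. \<Sum>i\<in>UNIV. reception_prob W j i * g j i) / real CARD('i)"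
    by (simp only: pointwise expectation_outcome_pmf fst_conv snd_conv)
       (simp add: expectation_received W(1))
  also have "(\<Sum>j\<in>UNIV. \<Sum>i\<in>UNIV. reception_prob W j i * g j i)
           = q * (1 - q) * edge_energy W v
             + (\<Sum>j\<in>UNIV. \<Sum>i\<in>UNIV. reception_prob W j i * (q * ((v i)^2 - (v j)^2)))"
    by (simp add: g edge_energy_def distrib_left sum.distrib sum_distrib_left mult_ac)
  also have "(\<Sum>j\<in>UNIV. \<Sum>i\<in>UNIV. reception_prob W j i * (q * ((v i)^2 - (v j)^2))) = 0"
    by (rule sum_symmetric_times_antisymmetric)
       (auto intro: reception_prob_sym W(2) simp: algebra_simps)
  finally show ?thesis by simp
qed

definition pbga_gamma :: "('i::finite \<Rightarrow> 'i \<Rightarrow> real) \<Rightarrow> real \<Rightarrow> real" where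
  "pbga_gamma W q = (max_degree W + 1) * (q / (1 - q))"

lemma pbga_gamma_nonneg:
  assumes "0 < q" "q < 1" "\<And>i j. 0 \<le> W i j" "\<And>i j. W i j = W j i"
  shows "0 \<le> pbga_gamma W q"
  using assms max_degree_nonneg[of W] by (simp add: pbga_gamma_def)

lemma pbga_Lv_sq_le_dissipation:
  fixes W :: "'i::finite \<Rightarrow> 'i \<Rightarrow> real"
  assumes q: "0 < q" "q < 1"
    and W: "\<And>i j. 0 \<le> W i j \<and> W i j \<le> 1" "\<And>i j. W i j = W j i"
  shows "measure_pmf.expectation (outcome_pmf W) (\<lambda>\<omega>. (\<Sum>i\<in>UNIV. pbga_Lv q \<omega> v i)^2)
       \<le> pbga_gamma W q * measure_pmf.expectation (outcome_pmf W)
           (\<lambda>\<omega>. \<Sum>i\<in>UNIV. 2 * v i * pbga_Lv q \<omega> v i - (pbga_Lv q \<omega> v i)^2)"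
proof -
  have "pbga_gamma W q * (q * (1 - q)) = (max_degree W + 1) * q^2"
    using q by (simp add: pbga_gamma_def power2_eq_square)
  then show ?thesis
    using expectation_pbga_Lv_sum_sq[OF W, where q = q and v = v]
    by (simp add: expectation_pbga_dissipation[OF W] mult.assoc[symmetric])
qed

definition quad_form :: "('i::finite \<Rightarrow> 'i \<Rightarrow> real) \<Rightarrow> ('i \<Rightarrow> real) \<Rightarrow> real" where
  "quad_form M v = (\<Sum>i\<in>UNIV. \<Sum>k\<in>UNIV. v i * M i k * v k)"

lemma mat_le_iff_quad_form: "mat_le A B \<longleftrightarrow> (\<forall>v. quad_form A v \<le> quad_form B v)"
  by (simp add: mat_le_def quad_form_def algebra_simps sum_subtractf)

lemma quad_form_scale: "quad_form (\<lambda>i k. c * M i k) v = c * quad_form M v"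
  by (simp add: quad_form_def sum_distrib_left mult_ac)

lemma quad_form_mexp:
  fixes p :: "'w::finite pmf" and M :: "'w \<Rightarrow> 'i::finite \<Rightarrow> 'i \<Rightarrow> real"
  shows "quad_form (mexp p M) v = measure_pmf.expectation p (\<lambda>\<omega>. quad_form (M \<omega>) v)"
  by (simp add: quad_form_def mexp_def Bochner_Integration.integral_sum)

lemma quad_form_LT_ones_L:
  fixes L :: "'i::finite \<Rightarrow> 'i \<Rightarrow> real"
  shows "quad_form (mmult (mmult (mtrans L) ones_mat) L) v = (\<Sum>l\<in>UNIV. \<Sum>k\<in>UNIV. L l k * v k)^2"
proof -
  have "quad_form (mmult (mmult (mtrans L) ones_mat) L) v
      = (\<Sum>i\<in>UNIV. \<Sum>k\<in>UNIV. (\<Sum>m\<in>UNIV. L m i * v i) * (\<Sum>l\<in>UNIV. L l k * v k))"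
    unfolding quad_form_def mmult_def mtrans_def ones_mat_def
    by (simp add: sum_distrib_left[symmetric] sum_distrib_right[symmetric] mult_ac)
  also have "\<dots> = (\<Sum>i\<in>UNIV. \<Sum>m\<in>UNIV. L m i * v i) * (\<Sum>k\<in>UNIV. \<Sum>l\<in>UNIV. L l k * v k)"
    by (rule sum_product[symmetric])
  also have "(\<Sum>i\<in>UNIV. \<Sum>m\<in>UNIV. L m i * v i) = (\<Sum>l\<in>UNIV. \<Sum>k\<in>UNIV. L l k * v k)"
    by (rule sum.swap)
  finally show ?thesis by (simp add: power2_eq_square)
qed

lemma quad_form_dissipation_matrix:
  fixes L :: "'i::finite \<Rightarrow> 'i \<Rightarrow> real"
  shows "quad_form (\<lambda>i k. L i k + mtrans L i k - mmult (mtrans L) L i k) v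
       = (\<Sum>l\<in>UNIV. 2 * v l * (\<Sum>k\<in>UNIV. L l k * v k) - (\<Sum>k\<in>UNIV. L l k * v k)^2)"
proof -
  have L: "quad_form L v = (\<Sum>l\<in>UNIV. v l * (\<Sum>k\<in>UNIV. L l k * v k))"
    by (simp add: quad_form_def sum_distrib_left mult_ac)
  have LT: "quad_form (mtrans L) v = quad_form L v"
    unfolding quad_form_def mtrans_def by (subst sum.swap) (simp add: mult_ac)
  have LTL: "quad_form (mmult (mtrans L) L) v = (\<Sum>l\<in>UNIV. (\<Sum>k\<in>UNIV. L l k * v k)^2)"
  proof -
    have "quad_form (mmult (mtrans L) L) v
        = (\<Sum>i\<in>UNIV. \<Sum>k\<in>UNIV. \<Sum>l\<in>UNIV. (L l i * v i) * (L l k * v k))"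
      unfolding quad_form_def mmult_def mtrans_def by (simp add: sum_distrib_left sum_distrib_right mult_ac)
    also have "\<dots> = (\<Sum>i\<in>UNIV. \<Sum>l\<in>UNIV. \<Sum>k\<in>UNIV. (L l i * v i) * (L l k * v k))"
      by (intro sum.cong refl sum.swap)
    also have "\<dots> = (\<Sum>l\<in>UNIV. \<Sum>i\<in>UNIV. \<Sum>k\<in>UNIV. (L l i * v i) * (L l k * v k))"
      by (rule sum.swap)
    finally show ?thesis by (simp add: power2_eq_square sum_product)
  qed
  have "quad_form (\<lambda>i k. L i k + mtrans L i k - mmult (mtrans L) L i k) v
      = quad_form L v + quad_form (mtrans L) v - quad_form (mmult (mtrans L) L) v"
    by (simp add: quad_form_def algebra_simps sum.distrib sum_subtractf)
  also have "\<dots> = (\<Sum>l\<in>UNIV. 2 * v l * (\<Sum>k\<in>UNIV. L l k * v k) - (\<Sum>k\<in>UNIV. L l k * v k)^2)"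
    unfolding LT L LTL by (simp add: sum_subtractf sum.distrib[symmetric] algebra_simps)
  finally show ?thesis .
qed

text \<open>First claim: the columns of E[L] sum to zero (apply the mean lemma to a unit vector).\<close>
lemma mexp_pbga_L_column_sums:
  fixes W :: "'i::finite \<Rightarrow> 'i \<Rightarrow> real"
  assumes W: "\<And>i j. 0 \<le> W i j \<and> W i j \<le> 1" "\<And>i j. W i j = W j i"
  shows "(\<Sum>i\<in>UNIV. mexp (outcome_pmf W) (pbga_L q) i k) = 0"
proof -
  define e where "e m = (if m = k then 1 else (0::real))" for m
  have column: "pbga_L q \<omega> i k = pbga_Lv q \<omega> e i" for \<omega> i
    using pbga_L_mult_vec[of q \<omega> i e] by (simp add: e_def if_distrib cong: if_cong)
  have "(\<Sum>i\<in>UNIV. mexp (outcome_pmf W) (pbga_L q) i k)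
      = measure_pmf.expectation (outcome_pmf W) (\<lambda>\<omega>. \<Sum>i\<in>UNIV. pbga_Lv q \<omega> e i)"
    by (simp add: mexp_def column Bochner_Integration.integral_sum)
  also have "\<dots> = 0" by (rule expectation_pbga_Lv_sum[OF W])
  finally show ?thesis .
qed

text \<open>Second claim: the matrix inequality is the scalar inequality read through quadratic forms.\<close>
lemma pbga_mean_square_matrix_bound:
  fixes W :: "'i::finite \<Rightarrow> 'i \<Rightarrow> real"
  assumes q: "0 < q" "q < 1"
    and W: "\<And>i j. 0 \<le> W i j \<and> W i j \<le> 1" "\<And>i j. W i j = W j i"
  shows "mat_le (mexp (outcome_pmf W) (\<lambda>\<omega>. mmult (mmult (mtrans (pbga_L q \<omega>)) ones_mat) (pbga_L q \<omega>)))
            (\<lambda>i k. pbga_gamma W q * mexp (outcome_pmf W) (\<lambda>\<omega> i k. pbga_L q \<omega> i k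
                 + mtrans (pbga_L q \<omega>) i k - mmult (mtrans (pbga_L q \<omega>)) (pbga_L q \<omega>) i k) i k)"
  unfolding mat_le_iff_quad_form quad_form_scale quad_form_mexp
    quad_form_LT_ones_L quad_form_dissipation_matrix pbga_L_mult_vec
  using pbga_Lv_sq_le_dissipation[where W = W, OF q W] by blast

text \<open>The Lyapunov function (sum of deviations from a)^2 + gamma * (sum of squared deviations).
  By the scalar inequality it does not increase in expectation along one step.\<close>
definition potential :: "real \<Rightarrow> real \<Rightarrow> ('i::finite \<Rightarrow> real) \<Rightarrow> real" where
  "potential \<gamma> a x = (\<Sum>i\<in>UNIV. x i - a)^2 + \<gamma> * (\<Sum>i\<in>UNIV. (x i - a)^2)"

lemma pbga_step_Lv: "pbga_step q \<omega> x i - a = (x i - a) - pbga_Lv q \<omega> (\<lambda>i. x i - a) i"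
  by (simp add: pbga_step_def pbga_Lv_def algebra_simps)

lemma potential_pbga_step:
  fixes W :: "'i::finite \<Rightarrow> 'i \<Rightarrow> real"
  assumes q: "0 < q" "q < 1"
    and W: "\<And>i j. 0 \<le> W i j \<and> W i j \<le> 1" "\<And>i j. W i j = W j i"
  shows "measure_pmf.expectation (outcome_pmf W) (\<lambda>\<omega>. potential (pbga_gamma W q) a (pbga_step q \<omega> x))
       \<le> potential (pbga_gamma W q) a x"
proof -
  let ?E = "measure_pmf.expectation (outcome_pmf W)" and ?\<gamma> = "pbga_gamma W q"
  define y where "y = (\<lambda>i. x i - a)"
  define D where "D \<omega> = (\<Sum>i\<in>UNIV. pbga_Lv q \<omega> y i)" for \<omega>
  define Q where "Q \<omega> = (\<Sum>i\<in>UNIV. 2 * y i * pbga_Lv q \<omega> y i - (pbga_Lv q \<omega> y i)^2)" for \<omega>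
  define s where "s = (\<Sum>i\<in>UNIV. y i)"
  define s2 where "s2 = (\<Sum>i\<in>UNIV. (y i)^2)"
  have expand: "potential ?\<gamma> a (pbga_step q \<omega> x)
              = (s^2 + ?\<gamma> * s2) - 2 * s * D \<omega> + ((D \<omega>)^2 - ?\<gamma> * Q \<omega>)" for \<omega>
  proof -
    have step: "pbga_step q \<omega> x i - a = y i - pbga_Lv q \<omega> y i" for i
      unfolding y_def by (rule pbga_step_Lv)
    have sum: "(\<Sum>i\<in>UNIV. pbga_step q \<omega> x i - a) = s - D \<omega>"
      by (simp add: step s_def D_def sum_subtractf)
    have sum_sq: "(\<Sum>i\<in>UNIV. (pbga_step q \<omega> x i - a)^2) = s2 - Q \<omega>"
      by (simp add: step s2_def Q_def sum_subtractf[symmetric] power2_eq_square algebra_simps)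
    show ?thesis
      unfolding potential_def sum sum_sq by (simp add: power2_eq_square algebra_simps)
  qed
  have "?E (\<lambda>\<omega>. potential ?\<gamma> a (pbga_step q \<omega> x))
      = (s^2 + ?\<gamma> * s2) - 2 * s * ?E D + (?E (\<lambda>\<omega>. (D \<omega>)^2) - ?\<gamma> * ?E Q)"
    unfolding expand by simp
  also have "?E D = 0"
    unfolding D_def by (rule expectation_pbga_Lv_sum[OF W])
  also have "?E (\<lambda>\<omega>. (D \<omega>)^2) \<le> ?\<gamma> * ?E Q"
    unfolding D_def Q_def by (rule pbga_Lv_sq_le_dissipation[OF q W])
  also have "s^2 + ?\<gamma> * s2 = potential ?\<gamma> a x"
    by (simp add: potential_def s_def s2_def y_def)
  finally show ?thesis by simp
qed

lemma finite_set_pmf_pbga_state: "finite (set_pmf (pbga_state W q x0 t))"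
  by (induction t) auto

lemma expectation_pbga_state_le:
  fixes W :: "'i::finite \<Rightarrow> 'i \<Rightarrow> real" and \<Phi> :: "('i \<Rightarrow> real) \<Rightarrow> real"
  assumes step: "\<And>x. measure_pmf.expectation (outcome_pmf W) (\<lambda>\<omega>. \<Phi> (pbga_step q \<omega> x)) \<le> \<Phi> x"
  shows "measure_pmf.expectation (pbga_state W q x0 t) \<Phi> \<le> \<Phi> x0"
proof (induction t)
  case 0
  show ?case by simp
next
  case (Suc t)
  let ?p = "pbga_state W q x0 t"
  have "measure_pmf.expectation (pbga_state W q x0 (Suc t)) \<Phi>
      = (\<Sum>x\<in>set_pmf ?p. pmf ?p x *\<^sub>R
           measure_pmf.expectation (map_pmf (\<lambda>\<omega>. pbga_step q \<omega> x) (outcome_pmf W)) \<Phi>)"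
    by (simp only: pbga_state.simps, rule pmf_expectation_bind)
       (auto simp: finite_set_pmf_pbga_state)
  also have "\<dots> = (\<Sum>x\<in>set_pmf ?p. pmf ?p x *
                    measure_pmf.expectation (outcome_pmf W) (\<lambda>\<omega>. \<Phi> (pbga_step q \<omega> x)))"
    by simp
  also have "\<dots> \<le> (\<Sum>x\<in>set_pmf ?p. pmf ?p x * \<Phi> x)"
    by (intro sum_mono mult_left_mono step) simp
  also have "\<dots> = measure_pmf.expectation ?p \<Phi>"
    by (subst integral_measure_pmf[of "set_pmf ?p"]) (auto simp: finite_set_pmf_pbga_state)
  finally show ?case using Suc.IH by simp
qed

lemma potential_lower_bound:
  fixes x :: "'i::finite \<Rightarrow> real"
  assumes "0 \<le> \<gamma>"
  shows "real CARD('i) * (real CARD('i) + \<gamma>) * (avg x - a)^2 \<le> potential \<gamma> a x"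
proof -
  define N where "N = real CARD('i)"
  have N: "0 < N" by (simp add: N_def)
  have sum: "(\<Sum>i\<in>UNIV. x i - a) = N * (avg x - a)"
    by (simp add: avg_def N_def sum_subtractf algebra_simps)
  have "(N * (avg x - a))^2 \<le> N * (\<Sum>i\<in>UNIV. (x i - a)^2)"
    using weighted_cauchy_schwarz[where w = "\<lambda>_. 1" and d = "\<lambda>i. x i - a" and A = UNIV]
    by (simp add: sum N_def)
  then have "N * (avg x - a)^2 \<le> (\<Sum>i\<in>UNIV. (x i - a)^2)"
    using N by (simp add: power_mult_distrib power2_eq_square mult_ac)
  then have "\<gamma> * (N * (avg x - a)^2) \<le> \<gamma> * (\<Sum>i\<in>UNIV. (x i - a)^2)"
    using assms by (rule mult_left_mono)
  then show ?thesis
    unfolding potential_def sum N_def[symmetric] by (simp add: power_mult_distrib algebra_simps power2_eq_square)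
qed

lemma potential_at_average:
  fixes x :: "'i::finite \<Rightarrow> real"
  shows "potential \<gamma> (avg x) x = \<gamma> * real CARD('i) * Var x"
proof -
  have "(\<Sum>i\<in>UNIV. x i - avg x) = 0"
    by (simp add: avg_def sum_subtractf)
  then show ?thesis by (simp add: potential_def Var_def)
qed

lemma pbga_average_deviation:
  fixes W :: "'i::finite \<Rightarrow> 'i \<Rightarrow> real"
  assumes q: "0 < q" "q < 1"
    and W: "\<And>i j. 0 \<le> W i j \<and> W i j \<le> 1" "\<And>i j. W i j = W j i"
  shows "measure_pmf.expectation (pbga_state W q x0 t) (\<lambda>x. (avg x - avg x0)^2)
       \<le> pbga_gamma W q / (real CARD('i) + pbga_gamma W q) * Var x0"
proof -
  define N where "N = real CARD('i)"
  let ?\<gamma> = "pbga_gamma W q" and ?p = "pbga_state W q x0 t"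
  have \<gamma>: "0 \<le> ?\<gamma>" using pbga_gamma_nonneg q W by auto
  have N: "0 < N" by (simp add: N_def)
  have "N * (N + ?\<gamma>) * measure_pmf.expectation ?p (\<lambda>x. (avg x - avg x0)^2)
      = measure_pmf.expectation ?p (\<lambda>x. N * (N + ?\<gamma>) * (avg x - avg x0)^2)"
    by simp
  also have "\<dots> \<le> measure_pmf.expectation ?p (potential ?\<gamma> (avg x0))"
    by (rule integral_mono)
       (auto intro: integrable_measure_pmf_finite finite_set_pmf_pbga_state
             simp: N_def potential_lower_bound[OF \<gamma>])
  also have "\<dots> \<le> potential ?\<gamma> (avg x0) x0"
    by (rule expectation_pbga_state_le[OF potential_pbga_step[OF q W]])
  also have "\<dots> = N * (?\<gamma> * Var x0)"
    by (simp add: potential_at_average N_def)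
  finally have "(N + ?\<gamma>) * measure_pmf.expectation ?p (\<lambda>x. (avg x - avg x0)^2) \<le> ?\<gamma> * Var x0"
    using N by (simp add: mult.assoc)
  moreover have "0 < N + ?\<gamma>" using N \<gamma> by simp
  ultimately show ?thesis
    by (simp add: N_def pos_le_divide_eq mult.commute)
qed

theorem proposition5:
  fixes W :: "'i::finite \<Rightarrow> 'i \<Rightarrow> real" and q :: real and x0 :: "'i \<Rightarrow> real"
  assumes "0 < q" "q < 1"
    and "\<And>i j. 0 \<le> W i j \<and> W i j \<le> 1"
    and "\<And>i j. W i j = W j i"
  defines "Wmax \<equiv> Max (range (\<lambda>i. \<Sum>j\<in>UNIV. W i j))"
  defines "\<gamma> \<equiv> (Wmax + 1) * (q / (1 - q))"
  defines "EL \<equiv> \<lambda>M. mexp (outcome_pmf W) M"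
  shows "(\<forall>k. (\<Sum>i\<in>UNIV. EL (pbga_L q) i k) = 0)
    \<and> mat_le (EL (\<lambda>\<omega>. mmult (mmult (mtrans (pbga_L q \<omega>)) ones_mat) (pbga_L q \<omega>)))
             (\<lambda>i k. \<gamma> * EL (\<lambda>\<omega> i k. pbga_L q \<omega> i k + mtrans (pbga_L q \<omega>) i k
                         - mmult (mtrans (pbga_L q \<omega>)) (pbga_L q \<omega>) i k) i k)
    \<and> (\<forall>t. measure_pmf.expectation (pbga_state W q x0 t) (\<lambda>x. (avg x - avg x0)^2)
            \<le> \<gamma> / (real CARD('i) + \<gamma>) * Var x0)"
proof -
  have \<gamma>: "\<gamma> = pbga_gamma W q"
    by (simp add: \<gamma>_def Wmax_def pbga_gamma_def max_degree_def)
  show ?thesis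
    unfolding EL_def \<gamma>
    using mexp_pbga_L_column_sums[where W = W and q = q, OF assms(3,4)]
      pbga_mean_square_matrix_bound[where W = W, OF assms(1-4)]
      pbga_average_deviation[where W = W, OF assms(1-4)]
    by blast
qed

end
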